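(* The insertion-sort strategy is efficient, and hence regret-free.
   Context: Let $\mathcal{X}$ be a finite set of alternatives. A proto-ranking is an irreflexive and transitive binary relation on $\mathcal{X}$; a ranking is a total proto-ranking; a tournament is a total and asymmetric binary relation on $\mathcal{X}$. The chair has a fixed preference $\succ$, which is a ranking on $\mathcal{X}$. Interaction: given a tournament $\mathrel{W}$ (the "general will"), set $R_0=\varnothing$. In each period $t\geq 1$ in which $R_{t-1}$ is not total, the chair offers a pair $\{x,y\}$ of distinct alternatives that are unranked by $R_{t-1}$ (neither $x R_{t-1} y$ nor $y R_{t-1} x$); the winner is $x$ if $x \mathrel{W} y$ and $y$ otherwise, and $R_t$ is the transitive closure of $R_{t-1}\cup\{(\text{winner},\text{loser})\}$. The process stops when $R_t$ is total. A history is a finite sequence of ordered (winner, loser) pairs that can arise in this way (each offered pair unranked by the proto-ranking induced by the earlier pairs); it is terminal if its induced proto-ranking is total. A strategy of the chair assigns to each non-terminal history a pair of alternatives unranked at that history. The outcome of a strategy $\sigma$ under a tournament $\mathrel{W}$ is the final ranking produced. A ranking is $\mathrel{W}$-feasible if it is the outcome under $\mathrel{W}$ of some strategy. A ranking $R$ is more aligned with $\succ$ than a ranking $R'$ if for all $x,y$ with $x\succ y$, $x R' y$ implies $x R y$. A ranking is $\mathrel{W}$-unimprovable if no other $\mathrel{W}$-feasible ranking is more aligned with $\succ$ than it. A strategy is regret-free if for every tournament $\mathrel{W}$ its outcome under $\mathrel{W}$ is $\mathrel{W}$-unimprovable. A ranking $R$ is $\mathrel{W}$-efficient if $x\succ y$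 and $x\mathrel{W} y$ imply $x R y$. A strategy is efficient if for every tournament $\mathrel{W}$ its outcome under $\mathrel{W}$ is $\mathrel{W}$-efficient. The insertion-sort strategy: after a history with current proto-ranking $R$, for each $z$ let $L(z)=\{w\in\mathcal{X}: z\succ w,\ \text{neither } zRw \text{ nor } wRz\}$. Let $x$ be the $\succ$-worst alternative with $L(x)\neq\varnothing$, and $y$ the $R$-highest element of $L(x)$ (i.e. $yRz$ for all $z\in L(x)\setminus\{y\}$; this is well defined). The strategy offers $\{x,y\}$. *)

theory Defs
  imports Main
begin

text \<open>Alternatives: the universe of a finite type 'a. Relations are sets of pairs.
  A pair (x,y) in R means x R y.\<close>

definition proto_ranking :: "('a \<times> 'a) set \<Rightarrow> bool" where
  "proto_ranking R \<longleftrightarrow> irrefl R \<and> trans R"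

definition ranking :: "('a \<times> 'a) set \<Rightarrow> bool" where
  "ranking R \<longleftrightarrow> proto_ranking R \<and> total R"

definition tournament :: "('a \<times> 'a) set \<Rightarrow> bool" where
  "tournament W \<longleftrightarrow> total W \<and> asym W"

definition unranked :: "('a \<times> 'a) set \<Rightarrow> 'a \<Rightarrow> 'a \<Rightarrow> bool" where
  "unranked R x y \<longleftrightarrow> (x, y) \<notin> R \<and> (y, x) \<notin> R"

text \<open>A history is a list of (winner, loser) pairs; its induced proto-ranking
  is the transitive closure of the set of these pairs.\<close>

definition induced :: "('a \<times> 'a) list \<Rightarrow> ('a \<times> 'a) set" where
  "induced h = trancl (set h)"

inductive is_history :: "('a \<times> 'a) list \<Rightarrow> bool" where
  Nil: "is_history []"
| snoc: "is_history h \<Longrightarrow> w \<noteq> l \<Longrightarrow> unranked (induced h) w l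
           \<Longrightarrow> is_history (h @ [(w, l)])"

definition terminal :: "('a \<times> 'a) list \<Rightarrow> bool" where
  "terminal h \<longleftrightarrow> total (induced h)"

definition is_strategy :: "(('a \<times> 'a) list \<Rightarrow> 'a \<times> 'a) \<Rightarrow> bool" where
  "is_strategy \<sigma> \<longleftrightarrow> (\<forall>h. is_history h \<and> \<not> terminal h \<longrightarrow>
      fst (\<sigma> h) \<noteq> snd (\<sigma> h) \<and> unranked (induced h) (fst (\<sigma> h)) (snd (\<sigma> h)))"

definition contest :: "('a \<times> 'a) set \<Rightarrow> 'a \<times> 'a \<Rightarrow> 'a \<times> 'a" where
  "contest W p = (if p \<in> W then p else (snd p, fst p))"

primrec play :: "(('a \<times> 'a) list \<Rightarrow> 'a \<times> 'a) \<Rightarrow> ('a \<times> 'a) set \<Rightarrow> nat \<Rightarrow> ('a \<times> 'a) list" where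
  "play \<sigma> W 0 = []"
| "play \<sigma> W (Suc n) = (let h = play \<sigma> W n in
     if terminal h then h else h @ [contest W (\<sigma> h)])"

definition outcome :: "(('a \<times> 'a) list \<Rightarrow> 'a \<times> 'a) \<Rightarrow> ('a \<times> 'a) set \<Rightarrow> ('a \<times> 'a) set" where
  "outcome \<sigma> W = induced (play \<sigma> W (LEAST n. terminal (play \<sigma> W n)))"

definition feasible :: "('a \<times> 'a) set \<Rightarrow> ('a \<times> 'a) set \<Rightarrow> bool" where
  "feasible W R \<longleftrightarrow> ranking R \<and> (\<exists>\<sigma>. is_strategy \<sigma> \<and> outcome \<sigma> W = R)"

definition more_aligned :: "('a \<times> 'a) set \<Rightarrow> ('a \<times> 'a) set \<Rightarrow> ('a \<times> 'a) set \<Rightarrow> bool" where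
  "more_aligned P R R' \<longleftrightarrow> (\<forall>x y. (x, y) \<in> P \<longrightarrow> (x, y) \<in> R' \<longrightarrow> (x, y) \<in> R)"

definition unimprovable :: "('a \<times> 'a) set \<Rightarrow> ('a \<times> 'a) set \<Rightarrow> ('a \<times> 'a) set \<Rightarrow> bool" where
  "unimprovable P W R \<longleftrightarrow>
     (\<forall>R'. feasible W R' \<and> R' \<noteq> R \<longrightarrow> \<not> more_aligned P R' R)"

definition regret_free :: "('a \<times> 'a) set \<Rightarrow> (('a \<times> 'a) list \<Rightarrow> 'a \<times> 'a) \<Rightarrow> bool" where
  "regret_free P \<sigma> \<longleftrightarrow> (\<forall>W. tournament W \<longrightarrow> unimprovable P W (outcome \<sigma> W))"

definition W_efficient :: "('a \<times> 'a) set \<Rightarrow> ('a \<times> 'a) set \<Rightarrow> ('a \<times> 'a) set \<Rightarrow> bool" where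
  "W_efficient P W R \<longleftrightarrow> (\<forall>x y. (x, y) \<in> P \<and> (x, y) \<in> W \<longrightarrow> (x, y) \<in> R)"

definition efficient :: "('a \<times> 'a) set \<Rightarrow> (('a \<times> 'a) list \<Rightarrow> 'a \<times> 'a) \<Rightarrow> bool" where
  "efficient P \<sigma> \<longleftrightarrow> (\<forall>W. tournament W \<longrightarrow> W_efficient P W (outcome \<sigma> W))"

definition Lset :: "('a \<times> 'a) set \<Rightarrow> ('a \<times> 'a) set \<Rightarrow> 'a \<Rightarrow> 'a set" where
  "Lset P R z = {w. (z, w) \<in> P \<and> unranked R z w}"

definition insertion_sort :: "('a \<times> 'a) set \<Rightarrow> ('a \<times> 'a) list \<Rightarrow> 'a \<times> 'a" where
  "insertion_sort P h =
     (let R = induced h;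
          x = (THE x. Lset P R x \<noteq> {} \<and>
                 (\<forall>z. Lset P R z \<noteq> {} \<and> z \<noteq> x \<longrightarrow> (z, x) \<in> P));
          y = (THE y. y \<in> Lset P R x \<and> (\<forall>z \<in> Lset P R x - {y}. (y, z) \<in> R))
      in (x, y))"

end

theory Submission
  imports Defs
begin

(* Insertion sort inserts the alternatives one at a time, from the chair's least preferred
  upwards, into the chain already built from the alternatives below.  Along the play two
  invariants hold: every alternative below an alternative involved so far is comparable with
  everything below it, and every pair ordered against the chair's preference was itself won
  in a vote.  The second invariant makes the final ranking efficient, because a pair won by
  the chair's favourite can then never end up reversed.

  Efficiency implies regret-freeness: if a feasible ranking R' is more aligned than an
  efficient ranking R, then every vote of the play producing R' is ordered the same way by R
  (a reversal in R would be either preferred by the chair, hence kept by R', or contradict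
  efficiency), so R' is contained in R and the two rankings coincide. *)

lemma rankingD:
  assumes "ranking P"
  shows "(a, a) \<notin> P" and "(a, b) \<in> P \<Longrightarrow> (b, c) \<in> P \<Longrightarrow> (a, c) \<in> P"
    and "a \<noteq> b \<Longrightarrow> (a, b) \<in> P \<or> (b, a) \<in> P" and "(a, b) \<in> P \<Longrightarrow> (b, a) \<notin> P"
  using assms unfolding ranking_def proto_ranking_def irrefl_on_def trans_def total_on_def
  by blast+

lemma ranking_subset_eq:
  assumes "ranking R" "ranking R'" "R' \<subseteq> R"
  shows "R' = R"
proof
  show "R \<subseteq> R'"
  proof (clarify)
    fix a b assume "(a, b) \<in> R"
    then have "a \<noteq> b" and "(b, a) \<notin> R" using rankingD[OF assms(1)] by blast+
    then show "(a, b) \<in> R'" using rankingD(3)[OF assms(2)] assms(3) by blast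
  qed
qed (fact assms(3))

lemma trancl_insert_trans:
  assumes "trans R"
  shows "(insert (w, l) R)\<^sup>+ = R \<union> {(a, b). (a, w) \<in> R\<^sup>= \<and> (l, b) \<in> R\<^sup>=}"
  using assms by (simp add: trancl_insert rtrancl_trancl_reflcl del: reflcl_trancl)

lemma Field_trancl: "Field (R\<^sup>+) = Field R"
  by (simp add: Field_def)

lemma finite_chain_unique_top:
  assumes "finite A" "A \<noteq> {}" "irrefl R" "trans R"
    and chain: "\<And>u v. u \<in> A \<Longrightarrow> v \<in> A \<Longrightarrow> u \<noteq> v \<Longrightarrow> (u, v) \<in> R \<or> (v, u) \<in> R"
  shows "\<exists>!m. m \<in> A \<and> (\<forall>z \<in> A - {m}. (m, z) \<in> R)"
proof -
  have "\<exists>m \<in> A. \<forall>z \<in> A - {m}. (m, z) \<in> R"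
    using assms(1,2) chain
  proof (induction A rule: finite_ne_induct)
    case (singleton a)
    then show ?case by blast
  next
    case (insert a A)
    have "\<exists>m \<in> A. \<forall>z \<in> A - {m}. (m, z) \<in> R"
      by (rule insert.IH) (simp add: insert.prems)
    then obtain m where m: "m \<in> A" "\<forall>z \<in> A - {m}. (m, z) \<in> R" by blast
    have "(m, a) \<in> R \<or> (a, m) \<in> R"
      using insert.prems[of m a] m(1) \<open>a \<notin> A\<close> by auto
    then show ?case
      using m \<open>trans R\<close> by (auto dest: transD)
  qed
  moreover have "m = m'"
    if "\<forall>z \<in> A - {m}. (m, z) \<in> R" "\<forall>z \<in> A - {m'}. (m', z) \<in> R" "m \<in> A" "m' \<in> A" for m m'
    using that assms(3,4) unfolding irrefl_on_def trans_def by blast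
  ultimately show ?thesis by blast
qed

lemma Lset_antimono: "R \<subseteq> R' \<Longrightarrow> Lset P R' c \<subseteq> Lset P R c"
  by (auto simp: Lset_def unranked_def)

definition lower_sorted :: "('a \<times> 'a) set \<Rightarrow> ('a \<times> 'a) set \<Rightarrow> bool" where
  "lower_sorted P R \<longleftrightarrow> (\<forall>a \<in> Field R. \<forall>c. (a, c) \<in> P \<longrightarrow> Lset P R c = {})"

definition inversions_won :: "('a \<times> 'a) set \<Rightarrow> ('a \<times> 'a) set \<Rightarrow> ('a \<times> 'a) set \<Rightarrow> bool" where
  "inversions_won P W R \<longleftrightarrow> R \<inter> P\<inverse> \<subseteq> W"

locale insertion_point =
  fixes P R :: "('a \<times> 'a) set" and x :: 'a
  assumes ranking_P: "ranking P" and irrefl_R: "irrefl R" and trans_R: "trans R"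
    and L_x: "Lset P R x \<noteq> {}"
    and x_lowest: "\<And>z. Lset P R z \<noteq> {} \<Longrightarrow> z \<noteq> x \<Longrightarrow> (z, x) \<in> P"
begin

lemma R_irrefl: "(a, a) \<notin> R"
  using irrefl_R by (simp add: irrefl_on_def)

lemma R_trans: "(a, b) \<in> R \<Longrightarrow> (b, c) \<in> R \<Longrightarrow> (a, c) \<in> R"
  using trans_R by (blast dest: transD)

lemma below_x_settled: "(x, c) \<in> P \<Longrightarrow> Lset P R c = {}"
  using x_lowest rankingD[OF ranking_P] by blast

lemma below_x_chain:
  assumes "(x, u) \<in> P" "(x, v) \<in> P" "u \<noteq> v"
  shows "(u, v) \<in> R \<or> (v, u) \<in> R"
proof -
  have "(u, v) \<in> P \<or> (v, u) \<in> P" using rankingD(3)[OF ranking_P] assms(3) by blast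
  moreover have "Lset P R u = {}" "Lset P R v = {}" using below_x_settled assms(1,2) by blast+
  ultimately show ?thesis by (auto simp: Lset_def unranked_def)
qed

lemma L_x_unique_top:
  assumes "finite (Lset P R x)"
  shows "\<exists>!y. y \<in> Lset P R x \<and> (\<forall>z \<in> Lset P R x - {y}. (y, z) \<in> R)"
  using assms L_x irrefl_R trans_R
  by (rule finite_chain_unique_top) (use below_x_chain in \<open>auto simp: Lset_def\<close>)

end

locale insertion_step = insertion_point +
  fixes y :: 'a
  assumes y_in_L: "y \<in> Lset P R x"
    and y_top: "\<And>z. z \<in> Lset P R x \<Longrightarrow> z \<noteq> y \<Longrightarrow> (y, z) \<in> R"
begin

lemma xy_P: "(x, y) \<in> P" and xy_unranked: "(x, y) \<notin> R" "(y, x) \<notin> R"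
  using y_in_L by (auto simp: Lset_def unranked_def)

lemma x_neq_y: "x \<noteq> y"
  using xy_P rankingD(1)[OF ranking_P] by blast

context
  assumes sorted: "lower_sorted P R"
begin

lemma field_below_x:
  assumes "a \<in> Field R"
  shows "a = x \<or> (x, a) \<in> P"
proof (rule ccontr)
  assume "\<not> ?thesis"
  then have "(a, x) \<in> P" using rankingD(3)[OF ranking_P] by blast
  then have "Lset P R x = {}" using sorted assms unfolding lower_sorted_def by blast
  then show False using L_x by contradiction
qed

lemma above_x_above_y:
  assumes ax: "(a, x) \<in> R"
  shows "(a, y) \<in> R"
proof -
  have "(x, a) \<in> P" using field_below_x[OF FieldI1[OF ax]] ax R_irrefl by blast
  moreover have "a \<noteq> y" using ax xy_unranked by blast
  ultimately have "(a, y) \<in> R \<or> (y, a) \<in> R" using below_x_chain xy_P by blast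
  then show ?thesis using ax xy_unranked R_trans by blast
qed

text \<open>The converse uses the choice of y: an alternative ranked above y but not above x
  would belong to Lset P R x and lie above its top element y.\<close>

lemma above_y_above_x:
  assumes ay: "(a, y) \<in> R"
  shows "(a, x) \<in> R"
proof -
  have "a \<noteq> x" using ay xy_unranked by blast
  then have xa: "(x, a) \<in> P" using field_below_x[OF FieldI1[OF ay]] by blast
  have "\<not> unranked R x a"
  proof
    assume "unranked R x a"
    then have "(y, a) \<in> R" using y_top xa ay R_irrefl by (auto simp: Lset_def)
    then show False using ay R_irrefl R_trans by blast
  qed
  then have "(a, x) \<in> R \<or> (x, a) \<in> R" by (auto simp: unranked_def)
  then show ?thesis using ay xy_unranked R_trans by blast
qed

lemma below_x_below_y:
  assumes xb: "(x, b) \<in> R"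
  shows "(y, b) \<in> R"
proof -
  have "(x, b) \<in> P" using field_below_x[OF FieldI2[OF xb]] xb R_irrefl by blast
  moreover have "b \<noteq> y" using xb xy_unranked by blast
  ultimately have "(y, b) \<in> R \<or> (b, y) \<in> R" using below_x_chain xy_P by blast
  then show ?thesis using xb xy_unranked R_trans by blast
qed

lemma new_pairs_x_wins: "(insert (x, y) R)\<^sup>+ - R \<subseteq> P"
proof (clarify)
  fix a b assume new: "(a, b) \<in> (insert (x, y) R)\<^sup>+" "(a, b) \<notin> R"
  then have ax: "(a, x) \<in> R\<^sup>=" and yb: "(y, b) \<in> R\<^sup>="
    by (auto simp: trancl_insert_trans[OF trans_R])
  have "a = x"
  proof (rule ccontr)
    assume "a \<noteq> x"
    then have "(a, y) \<in> R" using ax above_x_above_y by blast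
    then show False using yb new(2) R_trans by blast
  qed
  moreover have "b = y \<or> (x, b) \<in> P"
    using yb field_below_x[OF FieldI2] xy_unranked by blast
  ultimately show "(a, b) \<in> P" using xy_P by blast
qed

lemma new_pairs_y_wins: "(insert (y, x) R)\<^sup>+ - R \<subseteq> {(y, x)}"
proof (clarify)
  fix a b assume new: "(a, b) \<in> (insert (y, x) R)\<^sup>+" "(a, b) \<notin> R"
  then have ay: "(a, y) \<in> R\<^sup>=" and xb: "(x, b) \<in> R\<^sup>="
    by (auto simp: trancl_insert_trans[OF trans_R])
  have "a = y"
  proof (rule ccontr)
    assume "a \<noteq> y"
    then have "(a, x) \<in> R" using ay above_y_above_x by blast
    then show False using xb new(2) R_trans by blast
  qed
  moreover have "b = x"
  proof (rule ccontr)
    assume "b \<noteq> x"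
    then have "(y, b) \<in> R" using xb below_x_below_y by blast
    then show False using ay new(2) R_trans by blast
  qed
  ultimately show "a = y \<and> b = x" ..
qed

lemma lower_sorted_step:
  assumes p: "p \<in> {(x, y), (y, x)}"
  shows "lower_sorted P ((insert p R)\<^sup>+)"
  unfolding lower_sorted_def
proof (intro ballI allI impI)
  fix a c assume a: "a \<in> Field ((insert p R)\<^sup>+)" and ac: "(a, c) \<in> P"
  have "a \<in> Field R \<or> a = x \<or> a = y" using a p by (auto simp: Field_trancl)
  then have "Lset P R c = {}"
  proof (elim disjE)
    assume "a \<in> Field R"
    then show ?thesis using sorted ac unfolding lower_sorted_def by blast
  next
    assume "a = x"
    then show ?thesis using ac below_x_settled by blast
  next
    assume "a = y"
    then show ?thesis using ac xy_P rankingD(2)[OF ranking_P] below_x_settled by blast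
  qed
  moreover have "R \<subseteq> (insert p R)\<^sup>+" by auto
  ultimately show "Lset P ((insert p R)\<^sup>+) c = {}" using Lset_antimono by (metis subset_empty)
qed

text \<open>A new pair either agrees with the chair's preference or is the vote itself.\<close>

lemma inversions_won_step:
  assumes "inversions_won P W R" "p \<in> {(x, y), (y, x)}" "p \<in> W"
  shows "inversions_won P W ((insert p R)\<^sup>+)"
  using assms new_pairs_x_wins new_pairs_y_wins rankingD(4)[OF ranking_P]
  unfolding inversions_won_def by blast

end

end

lemma contest_of_tournament:
  assumes "tournament W" "a \<noteq> b"
  shows "contest W (a, b) \<in> W" and "contest W (a, b) \<in> {(a, b), (b, a)}"
  using assms by (auto simp: contest_def tournament_def total_on_def)

lemma induced_snoc: "induced (h @ [p]) = (insert p (induced h))\<^sup>+"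
proof -
  obtain w l where p: "p = (w, l)" by force
  show ?thesis
    unfolding induced_def p by (simp add: trancl_insert rtrancl_trancl_reflcl[symmetric])
qed

lemma history_irrefl: "is_history h \<Longrightarrow> irrefl (induced h)"
proof (induction rule: is_history.induct)
  case Nil
  then show ?case by (simp add: induced_def irrefl_on_def)
next
  case (snoc h w l)
  have "trans (induced h)" by (simp add: induced_def)
  then show ?case
    using snoc unfolding induced_snoc trancl_insert_trans[OF \<open>trans (induced h)\<close>]
    unfolding irrefl_on_def trans_def unranked_def by blast
qed

lemma history_length_le_card:
  fixes h :: "('a::finite \<times> 'a) list"
  assumes "is_history h"
  shows "length h \<le> card (induced h)"
  using assms
proof (induction rule: is_history.induct)
  case Nil
  then show ?case by simp
next
  case (snoc h w l)
  have "induced h \<subset> induced (h @ [(w, l)])"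
    using snoc.hyps(3) by (auto simp: induced_snoc unranked_def)
  then have "card (induced h) < card (induced (h @ [(w, l)]))"
    by (simp add: psubset_card_mono)
  then show ?case using snoc.IH by simp
qed

lemma play_history:
  assumes \<sigma>: "is_strategy \<sigma>" and W: "tournament W"
  shows "is_history (play \<sigma> W n) \<and> set (play \<sigma> W n) \<subseteq> W"
proof (induction n)
  case 0
  then show ?case by (simp add: is_history.Nil)
next
  case (Suc n)
  let ?h = "play \<sigma> W n"
  show ?case
  proof (cases "terminal ?h")
    case True
    then show ?thesis using Suc by (simp add: Let_def)
  next
    case False
    obtain a b where ab: "\<sigma> ?h = (a, b)" by force
    have "a \<noteq> b" "unranked (induced ?h) a b"
      using \<sigma> Suc False ab unfolding is_strategy_def by force+
    moreover obtain w l where wl: "contest W (a, b) = (w, l)" by force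
    ultimately have "(w, l) \<in> W" "w \<noteq> l" "unranked (induced ?h) w l"
      using contest_of_tournament[OF W, of a b] by (auto simp: unranked_def)
    then show ?thesis
      using Suc False ab wl by (auto simp: Let_def intro: is_history.snoc)
  qed
qed

lemma length_play: "\<not> terminal (play \<sigma> W n) \<Longrightarrow> length (play \<sigma> W n) = n"
proof (induction n)
  case (Suc n)
  then have "\<not> terminal (play \<sigma> W n)" by (auto simp: Let_def)
  then show ?case using Suc.IH by (simp add: Let_def)
qed simp

lemma play_terminates:
  fixes \<sigma> :: "('a::finite \<times> 'a) list \<Rightarrow> 'a \<times> 'a"
  assumes "is_strategy \<sigma>" "tournament W"
  shows "\<exists>n. terminal (play \<sigma> W n)"
proof (rule ccontr)
  assume never: "\<nexists>n. terminal (play \<sigma> W n)"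
  let ?n = "Suc (card (UNIV :: ('a \<times> 'a) set))"
  have "?n = length (play \<sigma> W ?n)" using never length_play by metis
  also have "\<dots> \<le> card (induced (play \<sigma> W ?n))"
    using history_length_le_card play_history[OF assms] by blast
  also have "\<dots> \<le> card (UNIV :: ('a \<times> 'a) set)" by (rule card_mono) simp_all
  finally show False by simp
qed

lemma outcome_play:
  fixes \<sigma> :: "('a::finite \<times> 'a) list \<Rightarrow> 'a \<times> 'a"
  assumes "is_strategy \<sigma>" "tournament W"
  shows "\<exists>n. outcome \<sigma> W = induced (play \<sigma> W n) \<and> terminal (play \<sigma> W n)"
  using LeastI_ex[OF play_terminates[OF assms]] unfolding outcome_def by blast

lemma outcome_ranking:
  fixes \<sigma> :: "('a::finite \<times> 'a) list \<Rightarrow> 'a \<times> 'a"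
  assumes "is_strategy \<sigma>" "tournament W"
  shows "ranking (outcome \<sigma> W)"
proof -
  obtain n where n: "outcome \<sigma> W = induced (play \<sigma> W n)" "terminal (play \<sigma> W n)"
    using outcome_play[OF assms] by blast
  have "irrefl (outcome \<sigma> W)"
    unfolding n(1) using history_irrefl play_history[OF assms] by blast
  then show ?thesis
    using n by (simp add: ranking_def proto_ranking_def terminal_def induced_def)
qed

lemma feasible_trancl:
  fixes R :: "('a::finite \<times> 'a) set"
  assumes "tournament W" "feasible W R"
  shows "\<exists>S \<subseteq> W. R = S\<^sup>+"
proof -
  obtain \<sigma> where \<sigma>: "is_strategy \<sigma>" "outcome \<sigma> W = R"
    using assms(2) unfolding feasible_def by blast
  then obtain n where "R = induced (play \<sigma> W n)"
    using outcome_play[OF \<sigma>(1) assms(1)] by blast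
  then show ?thesis using play_history[OF \<sigma>(1) assms(1)] unfolding induced_def by blast
qed

lemma W_efficient_unimprovable:
  fixes R :: "('a::finite \<times> 'a) set"
  assumes P: "ranking P" and W: "tournament W" and R: "ranking R" and eff: "W_efficient P W R"
  shows "unimprovable P W R"
  unfolding unimprovable_def
proof (intro allI impI notI)
  fix R' assume R': "feasible W R' \<and> R' \<noteq> R" and aligned: "more_aligned P R' R"
  have R'_ranking: "ranking R'" using R' by (simp add: feasible_def)
  obtain S where S: "S \<subseteq> W" "R' = S\<^sup>+" using feasible_trancl W R' by blast
  have "S \<subseteq> R"
  proof (clarify)
    fix u v assume uv: "(u, v) \<in> S"
    then have uv': "(u, v) \<in> R'" "(u, v) \<in> W" using S by auto
    show "(u, v) \<in> R"
    proof (rule ccontr)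
      assume "(u, v) \<notin> R"
      moreover have "u \<noteq> v" using uv'(1) rankingD(1)[OF R'_ranking] by blast
      ultimately have vu: "(v, u) \<in> R" using rankingD(3)[OF R] by blast
      consider "(v, u) \<in> P" | "(u, v) \<in> P" using rankingD(3)[OF P] \<open>u \<noteq> v\<close> by blast
      then show False
      proof cases
        case 1
        then have "(v, u) \<in> R'" using aligned vu unfolding more_aligned_def by blast
        then show False using uv'(1) rankingD(4)[OF R'_ranking] by blast
      next
        case 2
        then have "(u, v) \<in> R" using eff uv'(2) unfolding W_efficient_def by blast
        then show False using \<open>(u, v) \<notin> R\<close> by contradiction
      qed
    qed
  qed
  then have "R' \<subseteq> R"
    using S(2) trancl_mono[of _ S R] R by (auto simp: ranking_def proto_ranking_def)
  then show False using ranking_subset_eq[OF R R'_ranking] R' by blast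
qed

lemma efficient_imp_regret_free:
  fixes \<sigma> :: "('a::finite \<times> 'a) list \<Rightarrow> 'a \<times> 'a"
  assumes "ranking P" "is_strategy \<sigma>" "efficient P \<sigma>"
  shows "regret_free P \<sigma>"
  using assms W_efficient_unimprovable outcome_ranking
  unfolding regret_free_def efficient_def by blast

lemma W_efficient_if_inversions_won:
  assumes P: "ranking P" and W: "tournament W" and "total R" "inversions_won P W R"
  shows "W_efficient P W R"
  unfolding W_efficient_def
proof (intro allI impI)
  fix a b assume ab: "(a, b) \<in> P \<and> (a, b) \<in> W"
  then have "a \<noteq> b" using rankingD(1)[OF P] by blast
  moreover have "(b, a) \<notin> R"
  proof
    assume "(b, a) \<in> R"
    then have "(b, a) \<in> W" using ab \<open>inversions_won P W R\<close> unfolding inversions_won_def by blast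
    then show False using ab W unfolding tournament_def asym_on_def by blast
  qed
  ultimately show "(a, b) \<in> R" using \<open>total R\<close> unfolding total_on_def by blast
qed

lemma insertion_sort_step:
  fixes P :: "('a::finite \<times> 'a) set"
  assumes P: "ranking P" and irrefl_h: "irrefl (induced h)" and open_h: "\<not> terminal h"
  shows "insertion_step P (induced h) (fst (insertion_sort P h)) (snd (insertion_sort P h))"
proof -
  define R where "R = induced h"
  define x where "x = (THE x. Lset P R x \<noteq> {} \<and> (\<forall>z. Lset P R z \<noteq> {} \<and> z \<noteq> x \<longrightarrow> (z, x) \<in> P))"
  define y where "y = (THE y. y \<in> Lset P R x \<and> (\<forall>z \<in> Lset P R x - {y}. (y, z) \<in> R))"
  have sort: "insertion_sort P h = (x, y)"
    by (simp add: insertion_sort_def Let_def R_def x_def y_def)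
  have "trans R" by (simp add: R_def induced_def)
  obtain u v where "u \<noteq> v" "unranked R u v"
    using open_h by (auto simp: R_def terminal_def total_on_def unranked_def)
  then have "{z. Lset P R z \<noteq> {}} \<noteq> {}"
    using rankingD(3)[OF P, of u v] by (auto simp: Lset_def unranked_def)
  then have "\<exists>!x. x \<in> {z. Lset P R z \<noteq> {}} \<and> (\<forall>z \<in> {z. Lset P R z \<noteq> {}} - {x}. (x, z) \<in> P\<inverse>)"
    using P rankingD(3)[OF P] unfolding ranking_def proto_ranking_def
    by (intro finite_chain_unique_top) auto
  then have "\<exists>!x. Lset P R x \<noteq> {} \<and> (\<forall>z. Lset P R z \<noteq> {} \<and> z \<noteq> x \<longrightarrow> (z, x) \<in> P)"
    by (simp add: Ball_def)
  then have "Lset P R x \<noteq> {} \<and> (\<forall>z. Lset P R z \<noteq> {} \<and> z \<noteq> x \<longrightarrow> (z, x) \<in> P)"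
    unfolding x_def by (rule theI')
  then have point: "insertion_point P R x"
    using P irrefl_h \<open>trans R\<close> by unfold_locales (auto simp: R_def)
  then interpret insertion_point P R x .
  have "\<exists>!y. y \<in> Lset P R x \<and> (\<forall>z \<in> Lset P R x - {y}. (y, z) \<in> R)"
    by (rule L_x_unique_top) simp
  then have "y \<in> Lset P R x \<and> (\<forall>z \<in> Lset P R x - {y}. (y, z) \<in> R)"
    unfolding y_def by (rule theI')
  then show ?thesis
    unfolding sort R_def[symmetric] insertion_step_def insertion_step_axioms_def
    using point by auto
qed

lemma insertion_sort_is_strategy:
  fixes P :: "('a::finite \<times> 'a) set"
  assumes P: "ranking P"
  shows "is_strategy (insertion_sort P)"
  unfolding is_strategy_def
proof (intro allI impI)
  fix h :: "('a \<times> 'a) list" assume h: "is_history h \<and> \<not> terminal h"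
  interpret insertion_step P "induced h" "fst (insertion_sort P h)" "snd (insertion_sort P h)"
    using insertion_sort_step[OF P] history_irrefl h by blast
  show "fst (insertion_sort P h) \<noteq> snd (insertion_sort P h) \<and>
      unranked (induced h) (fst (insertion_sort P h)) (snd (insertion_sort P h))"
    using x_neq_y xy_unranked by (simp add: unranked_def)
qed

lemma insertion_sort_invariants:
  fixes P :: "('a::finite \<times> 'a) set"
  assumes P: "ranking P" and W: "tournament W"
  shows "lower_sorted P (induced (play (insertion_sort P) W n))
    \<and> inversions_won P W (induced (play (insertion_sort P) W n))"
proof (induction n)
  case 0
  then show ?case by (simp add: induced_def lower_sorted_def inversions_won_def)
next
  case (Suc n)
  let ?h = "play (insertion_sort P) W n"
  let ?x = "fst (insertion_sort P ?h)" and ?y = "snd (insertion_sort P ?h)"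
  show ?case
  proof (cases "terminal ?h")
    case True
    then show ?thesis using Suc by (simp add: Let_def)
  next
    case False
    have "is_history ?h" using play_history[OF insertion_sort_is_strategy[OF P] W] by blast
    then interpret insertion_step P "induced ?h" ?x ?y
      using insertion_sort_step[OF P history_irrefl False] by blast
    have "contest W (?x, ?y) \<in> W" "contest W (?x, ?y) \<in> {(?x, ?y), (?y, ?x)}"
      using contest_of_tournament[OF W x_neq_y] by blast+
    then show ?thesis
      using Suc False lower_sorted_step inversions_won_step by (simp add: Let_def induced_snoc)
  qed
qed

lemma insertion_sort_efficient:
  fixes P :: "('a::finite \<times> 'a) set"
  assumes P: "ranking P"
  shows "efficient P (insertion_sort P)"
  unfolding efficient_def
proof (intro allI impI)
  fix W :: "('a \<times> 'a) set" assume W: "tournament W"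
  obtain n where n: "outcome (insertion_sort P) W = induced (play (insertion_sort P) W n)"
    "terminal (play (insertion_sort P) W n)"
    using outcome_play[OF insertion_sort_is_strategy[OF P] W] by blast
  then show "W_efficient P W (outcome (insertion_sort P) W)"
    using W_efficient_if_inversions_won[OF P W] insertion_sort_invariants[OF P W]
    by (simp add: terminal_def)
qed

theorem theorem1:
  fixes P :: "('a::finite \<times> 'a) set"
  assumes "ranking P"
  shows "is_strategy (insertion_sort P) \<and> efficient P (insertion_sort P)
         \<and> regret_free P (insertion_sort P)"
  using assms insertion_sort_is_strategy insertion_sort_efficient efficient_imp_regret_free
  by blast

end
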